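(* Let $a\ge7$ be an odd integer and $M_a=(4,6,a,a+2)$. Then $$I_{M_a}=\mathrm{rad}\big(x_2^{a-2}-x_1^{a-4}x_4^2,\;x_3^{a-2}-x_1^2x_4^{a-4},\;x_1x_4-x_2x_3,\;x_1^{a+2}-x_4^4,\;x_4^2-x_1x_3^2\big)$$ in $K[x_1,x_2,x_3,x_4]$, for any field $K$.
   Context: For a $1\times n$ integer row matrix $M=(a_1,\dots,a_n)$ (positive entries), the toric ideal $I_M\subseteq K[x_1,\dots,x_n]$ is the kernel of $K[x_1,\dots,x_n]\to K[t]$, $x_i\mapsto t^{a_i}$ (the ideal of the monomial curve $(t^{a_1},\dots,t^{a_n})$). *)

theory Defs
  imports "HOL-Library.Poly_Mapping" "HOL-Computational_Algebra.Polynomial"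
begin

datatype var = X1 | X2 | X3 | X4

type_synonym 'k mpoly4 = "(var \<Rightarrow>\<^sub>0 nat) \<Rightarrow>\<^sub>0 'k"

definition Var :: "var \<Rightarrow> 'k::comm_ring_1 mpoly4" where
  "Var v = Poly_Mapping.single (Poly_Mapping.single v 1) 1"

definition gen_ideal :: "'r::comm_ring_1 set \<Rightarrow> 'r set" where
  "gen_ideal G = {p. \<exists>c. p = (\<Sum>g\<in>G. c g * g)}"

definition radical :: "'r::comm_ring_1 set \<Rightarrow> 'r set" where
  "radical I = {p. \<exists>n. p ^ n \<in> I}"

text \<open>The K-algebra map K[x1..x4] -> K[t], x_i |-> t^(w x_i).\<close>
definition monomial_subst :: "(var \<Rightarrow> nat) \<Rightarrow> 'k::comm_ring_1 mpoly4 \<Rightarrow> 'k poly" where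
  "monomial_subst w p =
     (\<Sum>m\<in>Poly_Mapping.keys p. monom (Poly_Mapping.lookup p m)
        (\<Sum>v\<in>{X1, X2, X3, X4}. Poly_Mapping.lookup m v * w v))"

text \<open>Toric ideal of the 1 x 4 matrix (w X1, w X2, w X3, w X4): the kernel.\<close>
definition toric_ideal :: "(var \<Rightarrow> nat) \<Rightarrow> 'k::comm_ring_1 mpoly4 set" where
  "toric_ideal w = {p. monomial_subst w p = 0}"

end

theory Submission
  imports Defs
begin

text \<open>Write \<open>a = 2 * c + 7\<close> and let \<open>J\<close> be the radical of the ideal generated by the five
  binomials. The inclusion \<open>J \<subseteq> I\<^sub>M\<close> holds because the substitution
  \<open>x\<^sub>i \<mapsto> t^(w\<^sub>i)\<close> kills the generators and \<open>K[t]\<close> is a domain. Conversely, \<open>I\<^sub>M\<close> is spanned by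
  the binomials \<open>x^m - x^m'\<close> with \<open>m\<close> and \<open>m'\<close> of equal weighted degree, so it suffices that
  every monomial is congruent modulo \<open>J\<close> to the standard monomial \<open>x\<^sub>1^i * b\<close>,
  \<open>b \<in> {1, x\<^sub>2, x\<^sub>3, x\<^sub>4}\<close>, of the same degree; this one is unique, since the degrees
  \<open>0, 6, a, a + 2\<close> of \<open>1, x\<^sub>2, x\<^sub>3, x\<^sub>4\<close> are pairwise distinct modulo 4. Multiplying standard
  monomials needs six relations \<open>x\<^sub>i x\<^sub>j \<equiv> x\<^sub>1^e x\<^sub>k\<close> modulo \<open>J\<close>; they follow from the
  generators by saturation (if \<open>y^k f \<in> J\<close> and \<open>f\<close> lies in the radical of the ideal enlarged
  by \<open>y\<close>, then \<open>f \<in> J\<close>), with \<open>y = x\<^sub>3\<close>, modulo which \<open>x\<^sub>1, x\<^sub>2, x\<^sub>4\<close> are nilpotent, and with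
  \<open>y = x\<^sub>1\<close>, modulo which \<open>x\<^sub>3, x\<^sub>4\<close> are nilpotent.\<close>

lemma gen_idealI: "p = (\<Sum>g\<in>G. c g * g) \<Longrightarrow> p \<in> gen_ideal G"
  unfolding gen_ideal_def by blast

lemma gen_ideal_0: "0 \<in> gen_ideal G"
  by (rule gen_idealI[where c = "\<lambda>_. 0"]) simp

lemma gen_ideal_add:
  assumes "p \<in> gen_ideal G" "q \<in> gen_ideal G"
  shows "p + q \<in> gen_ideal G"
proof -
  obtain c d where "p = (\<Sum>g\<in>G. c g * g)" "q = (\<Sum>g\<in>G. d g * g)"
    using assms unfolding gen_ideal_def by blast
  then have "p + q = (\<Sum>g\<in>G. (c g + d g) * g)"
    by (simp add: sum.distrib distrib_right)
  then show ?thesis by (rule gen_idealI)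
qed

lemma gen_ideal_mult_left:
  assumes "p \<in> gen_ideal G"
  shows "r * p \<in> gen_ideal G"
proof -
  obtain c where "p = (\<Sum>g\<in>G. c g * g)"
    using assms unfolding gen_ideal_def by blast
  then have "r * p = (\<Sum>g\<in>G. (r * c g) * g)"
    by (simp add: sum_distrib_left mult.assoc)
  then show ?thesis by (rule gen_idealI)
qed

lemma gen_ideal_sum: "(\<And>x. x \<in> A \<Longrightarrow> f x \<in> gen_ideal G) \<Longrightarrow> sum f A \<in> gen_ideal G"
  by (induction A rule: infinite_finite_induct) (auto intro: gen_ideal_0 gen_ideal_add)

lemma generator_in_gen_ideal:
  assumes "finite G" "g \<in> G"
  shows "g \<in> gen_ideal G"
proof (rule gen_idealI)
  have "(\<Sum>h\<in>G. (if h = g then 1 else 0) * h) = (\<Sum>h\<in>G. if h = g then h else 0)"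
    by (rule sum.cong) auto
  then show "g = (\<Sum>h\<in>G. (if h = g then 1 else 0) * h)"
    using assms by simp
qed

lemma gen_ideal_insertE:
  assumes "finite G" "p \<in> gen_ideal (insert y G)"
  obtains k q where "q \<in> gen_ideal G" "p = k * y + q"
proof (cases "y \<in> G")
  case True
  then show ?thesis
    using that[of p 0] assms(2) by (simp add: insert_absorb)
next
  case False
  obtain c where "p = (\<Sum>g\<in>insert y G. c g * g)"
    using assms(2) unfolding gen_ideal_def by blast
  then have "p = c y * y + (\<Sum>g\<in>G. c g * g)"
    using False assms(1) by simp
  then show ?thesis
    using that gen_idealI[OF refl] by blast
qed

lemma radicalI: "p ^ n \<in> I \<Longrightarrow> p \<in> radical I"
  unfolding radical_def by blast

lemma subset_radical: "p \<in> I \<Longrightarrow> p \<in> radical I"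
  using radicalI[of p 1] by simp

lemma radical_of_power: "p ^ k \<in> radical I \<Longrightarrow> p \<in> radical I"
  unfolding radical_def by (auto simp: power_mult[symmetric])

lemma radical_gen_ideal_0 [simp]: "0 \<in> radical (gen_ideal G)"
  by (rule subset_radical[OF gen_ideal_0])

lemma radical_mult_left: "p \<in> radical (gen_ideal G) \<Longrightarrow> r * p \<in> radical (gen_ideal G)"
  unfolding radical_def by (auto simp: power_mult_distrib intro: gen_ideal_mult_left)

lemma radical_mult_right: "p \<in> radical (gen_ideal G) \<Longrightarrow> p * r \<in> radical (gen_ideal G)"
  using radical_mult_left by (metis mult.commute)

lemma radical_add:
  assumes "p \<in> radical (gen_ideal G)" "q \<in> radical (gen_ideal G)"
  shows "p + q \<in> radical (gen_ideal G)"
proof -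
  obtain n m where n: "p ^ n \<in> gen_ideal G" and m: "q ^ m \<in> gen_ideal G"
    using assms unfolding radical_def by blast
  have "of_nat (n + m choose k) * p ^ k * q ^ (n + m - k) \<in> gen_ideal G" for k
  proof (cases "n \<le> k")
    case True
    then have "p ^ k = p ^ (k - n) * p ^ n"
      by (simp flip: power_add)
    then show ?thesis
      using gen_ideal_mult_left[OF n, of "of_nat (n + m choose k) * p ^ (k - n) * q ^ (n + m - k)"]
      by (simp add: ac_simps)
  next
    case False
    then have "q ^ (n + m - k) = q ^ (n - k) * q ^ m"
      by (simp flip: power_add)
    then show ?thesis
      using gen_ideal_mult_left[OF m, of "of_nat (n + m choose k) * p ^ k * q ^ (n - k)"]
      by (simp add: ac_simps)
  qed
  then have "(p + q) ^ (n + m) \<in> gen_ideal G"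
    unfolding binomial_ring by (intro gen_ideal_sum)
  then show ?thesis by (rule radicalI)
qed

lemma radical_uminus: "p \<in> radical (gen_ideal G) \<Longrightarrow> - p \<in> radical (gen_ideal G)"
  using radical_mult_left[of p G "- 1"] by simp

lemma radical_diff:
  "p \<in> radical (gen_ideal G) \<Longrightarrow> q \<in> radical (gen_ideal G) \<Longrightarrow> p - q \<in> radical (gen_ideal G)"
  using radical_add[of p G "- q"] radical_uminus[of q G] by simp

lemma radical_of_diff:
  "p - q \<in> radical (gen_ideal G) \<Longrightarrow> q \<in> radical (gen_ideal G) \<Longrightarrow> p \<in> radical (gen_ideal G)"
  using radical_add[of "p - q" G q] by simp

lemma radical_sum:
  "(\<And>x. x \<in> A \<Longrightarrow> f x \<in> radical (gen_ideal G)) \<Longrightarrow> sum f A \<in> radical (gen_ideal G)"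
  by (induction A rule: infinite_finite_induct) (auto intro: radical_add)

lemma radical_power: "p \<in> radical (gen_ideal G) \<Longrightarrow> 0 < k \<Longrightarrow> p ^ k \<in> radical (gen_ideal G)"
  using radical_mult_left[of p G "p ^ (k - 1)"] by (simp flip: power_Suc2)

lemma radical_power_diff:
  assumes "u - v \<in> radical (gen_ideal G)"
  shows "u ^ n - v ^ n \<in> radical (gen_ideal G)"
proof (induction n)
  case (Suc n)
  have "u ^ Suc n - v ^ Suc n = u * (u ^ n - v ^ n) + v ^ n * (u - v)"
    by (simp add: algebra_simps)
  then show ?case
    using radical_add[OF radical_mult_left[OF Suc] radical_mult_left[OF assms]] by simp
qed simp

lemma radical_saturate:
  assumes "finite G" and "f \<in> radical (gen_ideal (insert y G))"
    and "y ^ k * f \<in> radical (gen_ideal G)"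
  shows "f \<in> radical (gen_ideal G)"
proof -
  have "(y * f) ^ Suc k = (y ^ k * f) * (y * f ^ k)"
    by (simp add: power_mult_distrib ac_simps)
  then have yf: "y * f \<in> radical (gen_ideal G)"
    using radical_mult_right[OF assms(3)] radical_of_power by metis
  obtain m where "f ^ m \<in> gen_ideal (insert y G)"
    using assms(2) unfolding radical_def by blast
  then obtain r q where q: "q \<in> gen_ideal G" and fm: "f ^ m = r * y + q"
    using gen_ideal_insertE[OF assms(1)] by metis
  have "f ^ Suc m = r * (y * f) + f * q"
    using fm by (simp add: algebra_simps)
  also have "\<dots> \<in> radical (gen_ideal G)"
    using radical_add[OF radical_mult_left[OF yf] radical_mult_left[OF subset_radical[OF q]]] .
  finally show ?thesis by (rule radical_of_power)
qed

lemma radical_of_power_diff_mult: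
  assumes "p ^ n - r * y \<in> radical (gen_ideal G)" "y \<in> radical (gen_ideal G)"
  shows "p \<in> radical (gen_ideal G)"
  using radical_of_diff[OF assms(1) radical_mult_left[OF assms(2)]] by (rule radical_of_power)

locale curve_relations =
  fixes x1 x2 x3 x4 :: "'r::comm_ring_1" and c :: nat
begin

text \<open>The generators for \<open>a = 2 * c + 7\<close>; working with \<open>c\<close> avoids the truncated
  subtractions \<open>a - 2\<close> and \<open>a - 4\<close>.\<close>

definition gens :: "'r set" where
  "gens = { x2 ^ (2*c+5) - x1 ^ (2*c+3) * x4 ^ 2,
            x3 ^ (2*c+5) - x1 ^ 2 * x4 ^ (2*c+3),
            x1 * x4 - x2 * x3,
            x1 ^ (2*c+9) - x4 ^ 4,
            x4 ^ 2 - x1 * x3 ^ 2 }"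

abbreviation J :: "'r set" where
  "J \<equiv> radical (gen_ideal gens)"

lemma finite_gens: "finite gens"
  by (simp add: gens_def)

lemma gens_in_J:
  "x2 ^ (2*c+5) - x1 ^ (2*c+3) * x4 ^ 2 \<in> J"
  "x3 ^ (2*c+5) - x1 ^ 2 * x4 ^ (2*c+3) \<in> J"
  "x1 * x4 - x2 * x3 \<in> J"
  "x1 ^ (2*c+9) - x4 ^ 4 \<in> J"
  "x4 ^ 2 - x1 * x3 ^ 2 \<in> J"
  by (intro subset_radical generator_in_gen_ideal finite_gens; simp add: gens_def)+

lemma nilpotent_mod_x3:
  "x1 \<in> radical (gen_ideal (insert x3 gens))" "x2 \<in> radical (gen_ideal (insert x3 gens))"
proof -
  let ?R = "radical (gen_ideal (insert x3 gens))"
  have gen: "g \<in> ?R" if "g \<in> insert x3 gens" for g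
    using that finite_gens by (intro subset_radical generator_in_gen_ideal) auto
  have "x4 ^ 2 - (x1 * x3) * x3 \<in> ?R"
    using gen by (simp add: gens_def power2_eq_square ac_simps)
  then have x4: "x4 \<in> ?R"
    using gen[of x3] by (simp add: radical_of_power_diff_mult)
  have "x1 ^ (2*c+9) - x4 ^ 3 * x4 \<in> ?R"
    using gen by (simp add: gens_def flip: power_Suc2)
  then show "x1 \<in> ?R"
    using x4 by (rule radical_of_power_diff_mult)
  have "x2 ^ (2*c+5) - (x1 ^ (2*c+3) * x4) * x4 \<in> ?R"
    using gen by (simp add: gens_def power2_eq_square ac_simps)
  then show "x2 \<in> ?R"
    using x4 by (rule radical_of_power_diff_mult)
qed

lemma nilpotent_mod_x1:
  "x3 \<in> radical (gen_ideal (insert x1 gens))" "x4 \<in> radical (gen_ideal (insert x1 gens))"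
proof -
  let ?R = "radical (gen_ideal (insert x1 gens))"
  have gen: "g \<in> ?R" if "g \<in> insert x1 gens" for g
    using that finite_gens by (intro subset_radical generator_in_gen_ideal) auto
  have "x1 ^ (2*c+8) * x1 = x1 ^ (2*c+9)"
    by (simp add: power_add numeral_eq_Suc)
  then have "x4 ^ 4 - x1 ^ (2*c+8) * x1 \<in> ?R"
    using radical_uminus[OF gen[of "x1 ^ (2*c+9) - x4 ^ 4"]] by (simp add: gens_def)
  then show x4: "x4 \<in> ?R"
    using gen[of x1] by (simp add: radical_of_power_diff_mult)
  have "x3 ^ (2*c+5) - (x1 * x4 ^ (2*c+3)) * x1 \<in> ?R"
    using gen by (simp add: gens_def power2_eq_square ac_simps)
  then show "x3 \<in> ?R"
    using gen[of x1] by (simp add: radical_of_power_diff_mult)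
qed

lemma rel_x2x3: "x2 * x3 - x1 * x4 \<in> J"
  using radical_uminus[OF gens_in_J(3)] by simp

lemma rel_x2x2: "x2 * x2 - x1 ^ 3 \<in> J"
proof (rule radical_saturate[OF finite_gens])
  show "x2 * x2 - x1 ^ 3 \<in> radical (gen_ideal (insert x3 gens))"
    using nilpotent_mod_x3 by (intro radical_diff radical_mult_left radical_power) auto
  have "x3 ^ 2 * (x2 * x2 - x1 ^ 3) = (x2 * x3 - x1 * x4) * (x2 * x3 + x1 * x4) + x1 ^ 2 * (x4 ^ 2 - x1 * x3 ^ 2)"
    by (simp add: algebra_simps power2_eq_square power3_eq_cube)
  also have "\<dots> \<in> J"
    using radical_add[OF radical_mult_right[OF rel_x2x3] radical_mult_left[OF gens_in_J(5)]] .
  finally show "x3 ^ 2 * (x2 * x2 - x1 ^ 3) \<in> J" .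
qed

lemma rel_x2x4: "x2 * x4 - x1 ^ 2 * x3 \<in> J"
proof (rule radical_saturate[OF finite_gens])
  show "x2 * x4 - x1 ^ 2 * x3 \<in> radical (gen_ideal (insert x1 gens))"
    using nilpotent_mod_x1 by (intro radical_diff radical_mult_left) auto
  have "x1 ^ 1 * (x2 * x4 - x1 ^ 2 * x3) = x2 * (x1 * x4 - x2 * x3) + x3 * (x2 * x2 - x1 ^ 3)"
    by (simp add: algebra_simps power2_eq_square power3_eq_cube)
  also have "\<dots> \<in> J"
    using radical_add[OF radical_mult_left[OF gens_in_J(3)] radical_mult_left[OF rel_x2x2]] .
  finally show "x1 ^ 1 * (x2 * x4 - x1 ^ 2 * x3) \<in> J" .
qed

lemma rel_x3x3: "x3 * x3 - x1 ^ (c+2) * x2 \<in> J"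
proof (rule radical_saturate[OF finite_gens])
  have "x1 \<in> radical (gen_ideal (insert x1 gens))"
    using finite_gens by (intro subset_radical generator_in_gen_ideal) auto
  then show "x3 * x3 - x1 ^ (c+2) * x2 \<in> radical (gen_ideal (insert x1 gens))"
    using nilpotent_mod_x1 by (intro radical_diff radical_mult_left radical_mult_right radical_power) auto
  have "(x2 * x2) ^ (c+2) - (x1 ^ 3) ^ (c+2) \<in> J"
    by (rule radical_power_diff[OF rel_x2x2])
  moreover have "x1 ^ (2*c+4) * (x3 * x3 - x1 ^ (c+2) * x2) =
      x2 * ((x2 * x2) ^ (c+2) - (x1 ^ 3) ^ (c+2)) - (x2 ^ (2*c+5) - x1 ^ (2*c+3) * x4 ^ 2)
      - x1 ^ (2*c+3) * (x4 ^ 2 - x1 * x3 ^ 2)"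
    by (simp add: algebra_simps power_add power_mult numeral_eq_Suc)
  ultimately show "x1 ^ (2*c+4) * (x3 * x3 - x1 ^ (c+2) * x2) \<in> J"
    using gens_in_J by (simp add: radical_diff radical_mult_left)
qed

lemma rel_x3x4: "x3 * x4 - x1 ^ (c+4) \<in> J"
proof (rule radical_saturate[OF finite_gens])
  have "x1 \<in> radical (gen_ideal (insert x1 gens))"
    using finite_gens by (intro subset_radical generator_in_gen_ideal) auto
  then show "x3 * x4 - x1 ^ (c+4) \<in> radical (gen_ideal (insert x1 gens))"
    using nilpotent_mod_x1 by (intro radical_diff radical_mult_left radical_power) auto
  have "x1 ^ 1 * (x3 * x4 - x1 ^ (c+4)) = x3 * (x1 * x4 - x2 * x3) + x2 * (x3 * x3 - x1 ^ (c+2) * x2)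
      + x1 ^ (c+2) * (x2 * x2 - x1 ^ 3)"
    by (simp add: algebra_simps power_add power_mult numeral_eq_Suc)
  also have "\<dots> \<in> J"
    using gens_in_J(3) rel_x3x3 rel_x2x2 by (simp add: radical_add radical_mult_left)
  finally show "x1 ^ 1 * (x3 * x4 - x1 ^ (c+4)) \<in> J" .
qed

lemma rel_x4x4: "x4 * x4 - x1 ^ (c+3) * x2 \<in> J"
proof -
  have "x4 * x4 - x1 ^ (c+3) * x2 = (x4 ^ 2 - x1 * x3 ^ 2) + x1 * (x3 * x3 - x1 ^ (c+2) * x2)"
    by (simp add: algebra_simps power2_eq_square power_add numeral_eq_Suc)
  also have "\<dots> \<in> J"
    using radical_add[OF gens_in_J(5) radical_mult_left[OF rel_x3x3]] .
  finally show ?thesis .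
qed

definition basis :: "nat \<Rightarrow> 'r" where
  "basis t = [1, x2, x3, x4] ! t"

definition basis_deg :: "nat \<Rightarrow> nat" where
  "basis_deg t = [0, 6, 2*c+7, 2*c+9] ! t"

definition std_equiv :: "'r \<Rightarrow> nat \<Rightarrow> bool" where
  "std_equiv p d \<longleftrightarrow> (\<exists>i t. t < 4 \<and> p - x1 ^ i * basis t \<in> J \<and> d = 4 * i + basis_deg t)"

lemma std_equivI:
  "u < 4 \<Longrightarrow> p - x1 ^ i * basis u \<in> J \<Longrightarrow> d = 4 * i + basis_deg u \<Longrightarrow> std_equiv p d"
  unfolding std_equiv_def by blast

lemma std_equiv_basis_mult_le:
  assumes "s \<le> t" "t < 4"
  shows "std_equiv (basis s * basis t) (basis_deg s + basis_deg t)"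
proof -
  have "s = 0 \<or> s = 1 \<and> t = 1 \<or> s = 1 \<and> t = 2 \<or> s = 1 \<and> t = 3
      \<or> s = 2 \<and> t = 2 \<or> s = 2 \<and> t = 3 \<or> s = 3 \<and> t = 3"
    using assms by arith
  then show ?thesis
  proof (elim disjE conjE)
    assume "s = 0"
    then show ?thesis
      using assms by (intro std_equivI[where i = 0 and u = t]) (simp_all add: basis_def basis_deg_def)
  next
    assume "s = 1" "t = 1"
    then show ?thesis
      using rel_x2x2 by (intro std_equivI[where i = 3 and u = 0]) (simp_all add: basis_def basis_deg_def)
  next
    assume "s = 1" "t = 2"
    then show ?thesis
      using rel_x2x3 by (intro std_equivI[where i = 1 and u = 3]) (simp_all add: basis_def basis_deg_def)
  next
    assume "s = 1" "t = 3"
    then show ?thesis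
      using rel_x2x4 by (intro std_equivI[where i = 2 and u = 2]) (simp_all add: basis_def basis_deg_def)
  next
    assume "s = 2" "t = 2"
    then show ?thesis
      using rel_x3x3 by (intro std_equivI[where i = "c+2" and u = 1]) (simp_all add: basis_def basis_deg_def)
  next
    assume "s = 2" "t = 3"
    then show ?thesis
      using rel_x3x4 by (intro std_equivI[where i = "c+4" and u = 0]) (simp_all add: basis_def basis_deg_def)
  next
    assume "s = 3" "t = 3"
    then show ?thesis
      using rel_x4x4 by (intro std_equivI[where i = "c+3" and u = 1]) (simp_all add: basis_def basis_deg_def)
  qed
qed

lemma std_equiv_basis_mult:
  assumes "s < 4" "t < 4"
  shows "std_equiv (basis s * basis t) (basis_deg s + basis_deg t)"
proof (cases "s \<le> t")
  case False
  then show ?thesis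
    using std_equiv_basis_mult_le[of t s] assms by (simp add: ac_simps)
qed (use std_equiv_basis_mult_le assms in blast)

lemma std_equiv_mult:
  assumes "std_equiv p d" "std_equiv q e"
  shows "std_equiv (p * q) (d + e)"
proof -
  obtain i s where s: "s < 4" "p - x1 ^ i * basis s \<in> J" "d = 4 * i + basis_deg s"
    using assms(1) unfolding std_equiv_def by blast
  obtain j t where t: "t < 4" "q - x1 ^ j * basis t \<in> J" "e = 4 * j + basis_deg t"
    using assms(2) unfolding std_equiv_def by blast
  obtain k u where u: "u < 4" "basis s * basis t - x1 ^ k * basis u \<in> J"
      "basis_deg s + basis_deg t = 4 * k + basis_deg u"
    using std_equiv_basis_mult[OF s(1) t(1)] unfolding std_equiv_def by blast
  have "p * q - x1 ^ (i + j + k) * basis u = (p - x1 ^ i * basis s) * q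
      + x1 ^ i * basis s * (q - x1 ^ j * basis t)
      + x1 ^ (i + j) * (basis s * basis t - x1 ^ k * basis u)"
    by (simp add: algebra_simps power_add)
  also have "\<dots> \<in> J"
    using s(2) t(2) u(2) by (simp add: radical_add radical_mult_left radical_mult_right)
  finally show ?thesis
    using s(3) t(3) u(1,3) by (intro std_equivI) auto
qed

lemma std_equiv_power: "std_equiv p d \<Longrightarrow> std_equiv (p ^ n) (n * d)"
proof (induction n)
  case 0
  then show ?case
    by (intro std_equivI[where i = 0 and u = 0]) (simp_all add: basis_def basis_deg_def)
next
  case (Suc n)
  then show ?case
    using std_equiv_mult[of p d "p ^ n" "n * d"] by simp
qed

lemma std_equiv_vars:
  "std_equiv x1 4" "std_equiv x2 6" "std_equiv x3 (2*c+7)" "std_equiv x4 (2*c+9)"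
proof -
  show "std_equiv x1 4"
    by (rule std_equivI[where i = 1 and u = 0]) (simp_all add: basis_def basis_deg_def)
  show "std_equiv x2 6"
    by (rule std_equivI[where i = 0 and u = 1]) (simp_all add: basis_def basis_deg_def)
  show "std_equiv x3 (2*c+7)"
    by (rule std_equivI[where i = 0 and u = 2]) (simp_all add: basis_def basis_deg_def)
  show "std_equiv x4 (2*c+9)"
    by (rule std_equivI[where i = 0 and u = 3]) (simp_all add: basis_def basis_deg_def)
qed

lemma std_equiv_monomial:
  "std_equiv (x1 ^ i * x2 ^ j * x3 ^ k * x4 ^ l) (4*i + 6*j + (2*c+7)*k + (2*c+9)*l)"
  using std_equiv_vars by (simp add: std_equiv_mult std_equiv_power ac_simps)

lemma basis_deg_mod_4_inj:
  assumes "s < 4" "t < 4" "4 * i + basis_deg s = 4 * j + basis_deg t"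
  shows "s = t"
proof -
  have "basis_deg s mod 4 = basis_deg t mod 4"
    using arg_cong[OF assms(3), of "\<lambda>n. n mod 4"] by simp
  moreover have "s \<in> {0, 1, 2, 3}" "t \<in> {0, 1, 2, 3}"
    using assms(1,2) by auto
  ultimately show ?thesis
    unfolding basis_deg_def by auto presburger+
qed

lemma std_equiv_unique:
  assumes "std_equiv p d" "std_equiv q d"
  shows "p - q \<in> J"
proof -
  obtain i s where s: "s < 4" "p - x1 ^ i * basis s \<in> J" "d = 4 * i + basis_deg s"
    using assms(1) unfolding std_equiv_def by blast
  obtain j t where t: "t < 4" "q - x1 ^ j * basis t \<in> J" "d = 4 * j + basis_deg t"
    using assms(2) unfolding std_equiv_def by blast
  have "s = t"
    using basis_deg_mod_4_inj s t by metis
  then have "i = j"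
    using s(3) t(3) by simp
  have "p - q = (p - x1 ^ i * basis s) - (q - x1 ^ j * basis t)"
    using \<open>s = t\<close> \<open>i = j\<close> by simp
  also have "\<dots> \<in> J"
    using radical_diff[OF s(2) t(2)] .
  finally show ?thesis .
qed

lemma congruent_monomials:
  assumes "4*i + 6*j + (2*c+7)*k + (2*c+9)*l = 4*i' + 6*j' + (2*c+7)*k' + (2*c+9)*l'"
  shows "x1 ^ i * x2 ^ j * x3 ^ k * x4 ^ l - x1 ^ i' * x2 ^ j' * x3 ^ k' * x4 ^ l' \<in> J"
  using std_equiv_unique[OF std_equiv_monomial std_equiv_monomial[of i' j' k' l', folded assms]] .

end

definition weighted_degree :: "(var \<Rightarrow> nat) \<Rightarrow> (var \<Rightarrow>\<^sub>0 nat) \<Rightarrow> nat" where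
  "weighted_degree w m = (\<Sum>v\<in>{X1, X2, X3, X4}. Poly_Mapping.lookup m v * w v)"

lemma monomial_subst_eq:
  "monomial_subst w p = (\<Sum>m\<in>Poly_Mapping.keys p. monom (Poly_Mapping.lookup p m) (weighted_degree w m))"
  unfolding monomial_subst_def weighted_degree_def ..

lemma monomial_subst_superset_keys:
  assumes "finite A" "Poly_Mapping.keys p \<subseteq> A"
  shows "monomial_subst w p = (\<Sum>m\<in>A. monom (Poly_Mapping.lookup p m) (weighted_degree w m))"
  unfolding monomial_subst_eq
  by (rule sum.mono_neutral_left[OF assms]) (auto simp: not_in_keys_iff_lookup_eq_zero)

lemma monomial_subst_0 [simp]: "monomial_subst w 0 = 0"
  by (simp add: monomial_subst_def)

lemma monomial_subst_add: "monomial_subst w (p + q) = monomial_subst w p + monomial_subst w q"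
proof -
  let ?A = "Poly_Mapping.keys p \<union> Poly_Mapping.keys q"
  have "monomial_subst w (p + q) = (\<Sum>m\<in>?A. monom (Poly_Mapping.lookup (p + q) m) (weighted_degree w m))"
    using keys_add[of p q] by (intro monomial_subst_superset_keys) auto
  also have "\<dots> = (\<Sum>m\<in>?A. monom (Poly_Mapping.lookup p m) (weighted_degree w m))
      + (\<Sum>m\<in>?A. monom (Poly_Mapping.lookup q m) (weighted_degree w m))"
    by (simp add: lookup_add add_monom[symmetric] sum.distrib)
  also have "\<dots> = monomial_subst w p + monomial_subst w q"
    by (subst (1 2) monomial_subst_superset_keys[of ?A]) auto
  finally show ?thesis .
qed

lemma monomial_subst_sum: "monomial_subst w (\<Sum>x\<in>A. f x) = (\<Sum>x\<in>A. monomial_subst w (f x))"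
  by (induction A rule: infinite_finite_induct) (simp_all add: monomial_subst_add)

lemma monomial_subst_diff: "monomial_subst w (p - q) = monomial_subst w p - monomial_subst w q"
  using monomial_subst_add[of w "p - q" q] by (simp add: eq_diff_eq)

lemma monomial_subst_single: "monomial_subst w (Poly_Mapping.single m a) = monom a (weighted_degree w m)"
  by (subst monomial_subst_superset_keys[of "{m}"]) auto

lemma sum_single_keys:
  "(\<Sum>m\<in>Poly_Mapping.keys p. Poly_Mapping.single m (Poly_Mapping.lookup p m)) = p" (is "?s = p")
proof (rule poly_mapping_eqI)
  fix k
  have "Poly_Mapping.lookup ?s k
      = (\<Sum>m\<in>Poly_Mapping.keys p. if m = k then Poly_Mapping.lookup p m else 0)"
    by (simp add: lookup_sum lookup_single when_def)
  also have "\<dots> = Poly_Mapping.lookup p k"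
    by (simp add: not_in_keys_iff_lookup_eq_zero)
  finally show "Poly_Mapping.lookup ?s k = Poly_Mapping.lookup p k" .
qed

lemma weighted_degree_add: "weighted_degree w (m + n) = weighted_degree w m + weighted_degree w n"
  unfolding weighted_degree_def by (simp add: lookup_add add_mult_distrib sum.distrib)

lemma monomial_subst_mult: "monomial_subst w (p * q) = monomial_subst w p * monomial_subst w q"
proof -
  have "p * q = (\<Sum>m\<in>Poly_Mapping.keys p. Poly_Mapping.single m (Poly_Mapping.lookup p m))
      * (\<Sum>n\<in>Poly_Mapping.keys q. Poly_Mapping.single n (Poly_Mapping.lookup q n))"
    by (simp only: sum_single_keys)
  also have "\<dots> = (\<Sum>m\<in>Poly_Mapping.keys p. \<Sum>n\<in>Poly_Mapping.keys q.
      Poly_Mapping.single (m + n) (Poly_Mapping.lookup p m * Poly_Mapping.lookup q n))"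
    by (simp add: sum_product mult_single)
  finally have "monomial_subst w (p * q) = (\<Sum>m\<in>Poly_Mapping.keys p. \<Sum>n\<in>Poly_Mapping.keys q.
      monom (Poly_Mapping.lookup p m) (weighted_degree w m) * monom (Poly_Mapping.lookup q n) (weighted_degree w n))"
    by (simp add: monomial_subst_sum monomial_subst_single mult_monom weighted_degree_add)
  also have "\<dots> = monomial_subst w p * monomial_subst w q"
    unfolding monomial_subst_eq by (simp add: sum_product)
  finally show ?thesis .
qed

lemma monomial_subst_1: "monomial_subst w 1 = 1"
  using monomial_subst_single[of w 0 1] by (simp add: weighted_degree_def)

lemma monomial_subst_power: "monomial_subst w (p ^ n) = monomial_subst w p ^ n"
  by (induction n) (simp_all add: monomial_subst_1 monomial_subst_mult)

lemma monomial_subst_Var: "monomial_subst w (Var v) = monom 1 (w v)"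
  unfolding Var_def monomial_subst_single weighted_degree_def by (cases v) (simp_all add: lookup_single)

lemma coeff_monomial_subst:
  "coeff (monomial_subst w p) d = (\<Sum>m | m \<in> Poly_Mapping.keys p \<and> weighted_degree w m = d. Poly_Mapping.lookup p m)"
  unfolding monomial_subst_eq coeff_sum coeff_monom by (simp add: sum.inter_filter)

lemma single_sum: "Poly_Mapping.single k (\<Sum>x\<in>A. f x) = (\<Sum>x\<in>A. Poly_Mapping.single k (f x))"
  by (induction A rule: infinite_finite_induct) (simp_all add: single_add)

lemma Var_power: "(Var v :: 'k::comm_ring_1 mpoly4) ^ n = Poly_Mapping.single (Poly_Mapping.single v n) 1"
  by (induction n) (simp_all add: Var_def mult_single single_add[symmetric])

lemma monomial_eq_Var_powers:
  "(Poly_Mapping.single m 1 :: 'k::comm_ring_1 mpoly4) =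
    Var X1 ^ Poly_Mapping.lookup m X1 * Var X2 ^ Poly_Mapping.lookup m X2 * Var X3 ^ Poly_Mapping.lookup m X3 * Var X4 ^ Poly_Mapping.lookup m X4"
proof -
  have "m = Poly_Mapping.single X1 (Poly_Mapping.lookup m X1) + Poly_Mapping.single X2 (Poly_Mapping.lookup m X2)
      + Poly_Mapping.single X3 (Poly_Mapping.lookup m X3) + Poly_Mapping.single X4 (Poly_Mapping.lookup m X4)"
    (is "m = ?m")
  proof (rule poly_mapping_eqI)
    show "Poly_Mapping.lookup m v = Poly_Mapping.lookup ?m v" for v
      by (cases v) (simp_all add: lookup_add lookup_single)
  qed
  then show ?thesis
    by (simp add: Var_power mult_single)
qed

lemma toric_ideal_subset_radical:
  fixes G :: "'k::comm_ring_1 mpoly4 set"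
  assumes binomials: "\<And>m m'. weighted_degree w m = weighted_degree w m' \<Longrightarrow>
      Poly_Mapping.single m 1 - Poly_Mapping.single m' 1 \<in> radical (gen_ideal G)"
  shows "toric_ideal w \<subseteq> radical (gen_ideal G)"
proof
  fix p :: "'k mpoly4"
  assume "p \<in> toric_ideal w"
  then have coeff_0: "coeff (monomial_subst w p) d = 0" for d
    by (simp add: toric_ideal_def)
  let ?deg = "weighted_degree w"
  define rep where "rep = inv_into (Poly_Mapping.keys p) ?deg"
  have rep_deg: "?deg (rep (?deg m)) = ?deg m" if "m \<in> Poly_Mapping.keys p" for m
    unfolding rep_def using that by (intro f_inv_into_f imageI)
  have "(\<Sum>m\<in>Poly_Mapping.keys p. Poly_Mapping.single (rep (?deg m)) (Poly_Mapping.lookup p m))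
      = (\<Sum>d\<in>?deg ` Poly_Mapping.keys p. \<Sum>m | m \<in> Poly_Mapping.keys p \<and> ?deg m = d.
          Poly_Mapping.single (rep (?deg m)) (Poly_Mapping.lookup p m))"
    by (rule sum.image_gen) simp
  also have "\<dots> = (\<Sum>d\<in>?deg ` Poly_Mapping.keys p. Poly_Mapping.single (rep d) (coeff (monomial_subst w p) d))"
    by (intro sum.cong refl) (simp add: coeff_monomial_subst single_sum)
  also have "\<dots> = 0"
    by (simp add: coeff_0)
  finally have reps_0: "(\<Sum>m\<in>Poly_Mapping.keys p. Poly_Mapping.single (rep (?deg m)) (Poly_Mapping.lookup p m)) = 0" .
  have "p = (\<Sum>m\<in>Poly_Mapping.keys p.
      Poly_Mapping.single m (Poly_Mapping.lookup p m) - Poly_Mapping.single (rep (?deg m)) (Poly_Mapping.lookup p m))"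
    using reps_0 by (simp add: sum_subtractf sum_single_keys)
  also have "\<dots> = (\<Sum>m\<in>Poly_Mapping.keys p.
      Poly_Mapping.single 0 (Poly_Mapping.lookup p m) * (Poly_Mapping.single m 1 - Poly_Mapping.single (rep (?deg m)) 1))"
    by (simp add: right_diff_distrib mult_single)
  also have "\<dots> \<in> radical (gen_ideal G)"
    using binomials rep_deg by (intro radical_sum radical_mult_left) simp
  finally show "p \<in> radical (gen_ideal G)" .
qed

lemma radical_subset_toric_ideal:
  fixes G :: "'k::idom mpoly4 set"
  assumes "\<And>g. g \<in> G \<Longrightarrow> monomial_subst w g = 0"
  shows "radical (gen_ideal G) \<subseteq> toric_ideal w"
proof
  fix p
  assume "p \<in> radical (gen_ideal G)"
  then obtain n r where "p ^ n = (\<Sum>g\<in>G. r g * g)"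
    unfolding radical_def gen_ideal_def by blast
  then have "monomial_subst w p ^ n = (\<Sum>g\<in>G. monomial_subst w (r g) * monomial_subst w g)"
    by (simp flip: monomial_subst_power add: monomial_subst_sum monomial_subst_mult)
  also have "\<dots> = 0"
    using assms by simp
  finally show "p \<in> toric_ideal w"
    by (simp add: toric_ideal_def)
qed

theorem mainTheorem7:
  fixes a :: nat
  assumes "odd a" and "a \<ge> 7"
  shows "(toric_ideal (\<lambda>v. case v of X1 \<Rightarrow> 4 | X2 \<Rightarrow> 6 | X3 \<Rightarrow> a | X4 \<Rightarrow> a + 2)
            :: 'k::field mpoly4 set)
    = radical (gen_ideal
        { Var X2 ^ (a - 2) - Var X1 ^ (a - 4) * Var X4 ^ 2,
          Var X3 ^ (a - 2) - Var X1 ^ 2 * Var X4 ^ (a - 4),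
          Var X1 * Var X4 - Var X2 * Var X3,
          Var X1 ^ (a + 2) - Var X4 ^ 4,
          Var X4 ^ 2 - Var X1 * Var X3 ^ 2 })"
    (is "toric_ideal ?w = radical (gen_ideal ?G)")
proof -
  have "\<exists>c. a = 2 * c + 7"
    using assms by presburger
  then obtain c where a: "a = 2 * c + 7" ..
  interpret curve_relations "Var X1 :: 'k mpoly4" "Var X2" "Var X3" "Var X4" c .
  have "a - 2 = 2*c+5" "a - 4 = 2*c+3" "a + 2 = 2*c+9"
    using a by simp_all
  then have G: "?G = gens"
    unfolding gens_def by (simp only:)
  have deg: "weighted_degree ?w m = 4 * Poly_Mapping.lookup m X1 + 6 * Poly_Mapping.lookup m X2
      + (2*c+7) * Poly_Mapping.lookup m X3 + (2*c+9) * Poly_Mapping.lookup m X4" for m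
    unfolding weighted_degree_def a by (simp add: algebra_simps)
  show ?thesis
    unfolding G
  proof
    show "toric_ideal ?w \<subseteq> J"
      by (rule toric_ideal_subset_radical) (simp add: deg monomial_eq_Var_powers congruent_monomials)
    show "J \<subseteq> toric_ideal ?w"
    proof (rule radical_subset_toric_ideal)
      fix g
      assume "g \<in> gens"
      then show "monomial_subst ?w g = 0"
        unfolding gens_def
        by (elim insertE emptyE; hypsubst;
            simp add: a monomial_subst_diff monomial_subst_mult monomial_subst_power
              monomial_subst_Var monom_power mult_monom algebra_simps)
    qed
  qed
qed

end
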